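(* Let $(X, Y, f, g)$ be a min-max Stackelberg game satisfying the Standing Assumption below. Suppose the outer player plays a sequence of strategies $x^{(1)}, \dots, x^{(T)} \in X$, and suppose that after $T$ iterations the outer player's asymmetric regret is at most $\varepsilon$: $$\max_{x \in X}\left[\frac{1}{T}\sum_{t=1}^T V(x^{(t)}) - \frac{1}{T}\sum_{t=1}^T V(x)\right] \le \varepsilon .$$ Let $\bar{x}^{(T)} = \frac{1}{T}\sum_{t=1}^T x^{(t)}$ and let $y^*(\bar{x}^{(T)}) \in \arg\max_{y \in Y : g(\bar{x}^{(T)}, y) \ge 0} f(\bar{x}^{(T)}, y)$. Then $(\bar{x}^{(T)}, y^*(\bar{x}^{(T)}))$ is an $(\varepsilon, 0)$-Stackelberg equilibrium.
   Context: A min-max Stackelberg game $(X, Y, f, g)$ consists of non-empty compact convex sets $X \subset \mathbb{R}^n$, $Y \subset \mathbb{R}^m$, a continuous objective $f: X \times Y \to \mathbb{R}$, and continuous constraint functions $g = (g_1, \dots, g_K)$, $g_k : X \times Y \to \mathbb{R}$; the game is $\min_{x \in X} \max_{y \in Y : g(x,y) \ge 0} f(x,y)$ (inequalities componentwise). The outer player's value function is $V(x) = \max_{y \in Y : g(x,y) \ge 0} f(x,y)$. A strategy profile $(x^*, y^* ) \in X \times Y$ with $g(x^*, y^* ) \ge 0$ is an $(\epsilon, \delta)$-Stackelberg equilibrium if $\max_{y \in Y : g(x^*, y) \ge 0} f(x^*, y) - \delta \le f(x^*, y^* ) \le \min_{x \in X} \max_{y \in Y : g(x,y) \ge 0} f(x,y)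 + \epsilon$. Standing Assumption: (1) (Slater) for every $x \in X$ there is $\hat y \in Y$ with $g_k(x, \hat y) > 0$ for all $k$; (2) $\nabla_x f, \nabla_x g_1, \dots, \nabla_x g_K$ exist and are continuous; (3a) $f$ is continuous, convex in $x$ and concave in $y$; (3b) for each $k$, the map $(\mu, x, y) \mapsto \mu g_k(x,y)$ is continuous, convex in $(\mu, x)$ over $\mathbb{R}_+ \times X$ for every $y \in Y$, and concave in $y$ over $Y$ for every $(\mu, x) \in \mathbb{R}_+ \times X$. *)

theory Defs
  imports "HOL-Analysis.Analysis"
begin

definition feasible :: "nat \<Rightarrow> (nat \<Rightarrow> 'a \<Rightarrow> 'b \<Rightarrow> real) \<Rightarrow> 'b set \<Rightarrow> 'a \<Rightarrow> 'b set" where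
  "feasible K g Y x = {y \<in> Y. \<forall>k<K. g k x y \<ge> 0}"

definition val :: "('a \<Rightarrow> 'b \<Rightarrow> real) \<Rightarrow> nat \<Rightarrow> (nat \<Rightarrow> 'a \<Rightarrow> 'b \<Rightarrow> real) \<Rightarrow> 'b set \<Rightarrow> 'a \<Rightarrow> real" where
  "val f K g Y x = (SUP y \<in> feasible K g Y x. f x y)"

definition stackelberg_eq ::
  "'a set \<Rightarrow> 'b set \<Rightarrow> ('a \<Rightarrow> 'b \<Rightarrow> real) \<Rightarrow> nat \<Rightarrow> (nat \<Rightarrow> 'a \<Rightarrow> 'b \<Rightarrow> real)
   \<Rightarrow> real \<Rightarrow> real \<Rightarrow> 'a \<Rightarrow> 'b \<Rightarrow> bool" where
  "stackelberg_eq X Y f K g eps delta xs ys \<longleftrightarrow>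
     xs \<in> X \<and> ys \<in> feasible K g Y xs \<and>
     val f K g Y xs - delta \<le> f xs ys \<and>
     f xs ys \<le> (INF x \<in> X. val f K g Y x) + eps"

definition standing_assumption ::
  "'a::euclidean_space set \<Rightarrow> 'b::euclidean_space set \<Rightarrow> ('a \<Rightarrow> 'b \<Rightarrow> real) \<Rightarrow> nat
   \<Rightarrow> (nat \<Rightarrow> 'a \<Rightarrow> 'b \<Rightarrow> real) \<Rightarrow> bool" where
  "standing_assumption X Y f K g \<longleftrightarrow>
     X \<noteq> {} \<and> compact X \<and> convex X \<and>
     Y \<noteq> {} \<and> compact Y \<and> convex Y \<and>
     continuous_on (X \<times> Y) (\<lambda>(x, y). f x y) \<and>
     (\<forall>k<K. continuous_on (X \<times> Y) (\<lambda>(x, y). g k x y)) \<and>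
     \<comment> \<open>(1) Slater\<close>
     (\<forall>x\<in>X. \<exists>y\<in>Y. \<forall>k<K. g k x y > 0) \<and>
     \<comment> \<open>(2) continuous partial gradients in x\<close>
     (\<exists>Gf :: 'a \<Rightarrow> 'b \<Rightarrow> 'a.
        (\<forall>x\<in>X. \<forall>y\<in>Y. ((\<lambda>x'. f x' y) has_derivative (\<lambda>h. Gf x y \<bullet> h)) (at x within X)) \<and>
        continuous_on (X \<times> Y) (\<lambda>(x, y). Gf x y)) \<and>
     (\<forall>k<K. \<exists>Gg :: 'a \<Rightarrow> 'b \<Rightarrow> 'a.
        (\<forall>x\<in>X. \<forall>y\<in>Y. ((\<lambda>x'. g k x' y) has_derivative (\<lambda>h. Gg x y \<bullet> h)) (at x within X)) \<and>
        continuous_on (X \<times> Y) (\<lambda>(x, y). Gg x y)) \<and>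
     \<comment> \<open>(3a) convex-concave objective\<close>
     (\<forall>y\<in>Y. convex_on X (\<lambda>x. f x y)) \<and>
     (\<forall>x\<in>X. concave_on Y (\<lambda>y. f x y)) \<and>
     \<comment> \<open>(3b)\<close>
     (\<forall>k<K. continuous_on ({0..} \<times> X \<times> Y) (\<lambda>(\<mu>, x, y). \<mu> * g k x y)) \<and>
     (\<forall>k<K. \<forall>y\<in>Y. convex_on ({0..} \<times> X) (\<lambda>(\<mu>, x). \<mu> * g k x y)) \<and>
     (\<forall>k<K. \<forall>\<mu>\<ge>0. \<forall>x\<in>X. concave_on Y (\<lambda>y. \<mu> * g k x y))"

end

theory Submission
  imports Defs
begin

text \<open>By joint convexity of \<open>(\<mu>, x) \<mapsto> \<mu> g\<^sub>k(x, y)\<close>, a constraint that holds at the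
  average strategy \<open>x\<^sup>-\<close> also holds at every iterate; hence a best response \<open>y\<^sup>*\<close> to \<open>x\<^sup>-\<close> is
  feasible against every \<open>x\<^sup>(\<^sup>t\<^sup>)\<close>. Convexity of \<open>f(\<cdot>, y\<^sup>*)\<close> then bounds \<open>f(x\<^sup>-, y\<^sup>*)\<close> by the
  average of \<open>f(x\<^sup>(\<^sup>t\<^sup>), y\<^sup>*) \<le> V(x\<^sup>(\<^sup>t\<^sup>))\<close>, and the regret bound compares this average with
  \<open>V(x)\<close> for every \<open>x \<in> X\<close>.\<close>

lemma perspective_convex_on_imp_le:
  fixes h :: "'a::real_vector \<Rightarrow> real"
  assumes conv: "convex_on ({0..} \<times> X) (\<lambda>(\<mu>, x). \<mu> * h x)"
    and fin: "finite S" and sum_a: "(\<Sum>i\<in>S. a i) = 1" and a_nonneg: "\<And>i. i \<in> S \<Longrightarrow> a i \<ge> 0"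
    and pX: "\<And>i. i \<in> S \<Longrightarrow> p i \<in> X" and j: "j \<in> S" and a_j: "a j > 0"
  shows "h (\<Sum>i\<in>S. a i *\<^sub>R p i) \<le> h (p j)"
proof -
  \<comment> \<open>Apply Jensen to the points \<open>(\<delta>\<^sub>i\<^sub>j, p i)\<close>; their average is \<open>(a j, \<Sum>i\<in>S. a i *\<^sub>R p i)\<close>.\<close>
  define q where "q i = (if i = j then 1 else 0 :: real, p i)" for i
  have avg: "(\<Sum>i\<in>S. a i *\<^sub>R q i) = (a j, \<Sum>i\<in>S. a i *\<^sub>R p i)"
  proof (rule prod_eqI)
    have "(\<Sum>i\<in>S. a i * (if i = j then 1 else 0)) = a j"
      using fin j by (simp add: if_distrib sum.delta cong: if_cong)
    then show "fst (\<Sum>i\<in>S. a i *\<^sub>R q i) = fst (a j, \<Sum>i\<in>S. a i *\<^sub>R p i)"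
      by (simp add: fst_sum q_def)
  qed (simp add: snd_sum q_def)
  have "(\<lambda>(\<mu>, x). \<mu> * h x) (\<Sum>i\<in>S. a i *\<^sub>R q i) \<le> (\<Sum>i\<in>S. a i * (\<lambda>(\<mu>, x). \<mu> * h x) (q i))"
    using j by (intro convex_on_sum[OF fin _ conv sum_a a_nonneg]) (auto simp: q_def pX)
  also have "\<dots> = (\<Sum>i\<in>S. if i = j then a j * h (p j) else 0)"
    by (rule sum.cong) (auto simp: q_def)
  finally have "a j * h (\<Sum>i\<in>S. a i *\<^sub>R p i) \<le> a j * h (p j)"
    using fin j by (simp add: avg sum.delta)
  then show ?thesis
    using a_j by simp
qed

lemma feasible_average_imp_feasible:
  assumes conv: "\<forall>k<K. \<forall>y\<in>Y. convex_on ({0..} \<times> X) (\<lambda>(\<mu>, x). \<mu> * g k x y)"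
    and fin: "finite S" and sum_a: "(\<Sum>i\<in>S. a i) = 1" and a_pos: "\<And>i. i \<in> S \<Longrightarrow> a i > 0"
    and pX: "\<And>i. i \<in> S \<Longrightarrow> p i \<in> X" and j: "j \<in> S"
    and y: "y \<in> feasible K g Y (\<Sum>i\<in>S. a i *\<^sub>R p i)"
  shows "y \<in> feasible K g Y (p j)"
proof -
  have "g k (\<Sum>i\<in>S. a i *\<^sub>R p i) y \<le> g k (p j) y" if "k < K" for k
    using that y conv a_pos j
    by (intro perspective_convex_on_imp_le[OF _ fin sum_a _ pX j]) (auto simp: feasible_def less_imp_le)
  with y show ?thesis
    unfolding feasible_def by force
qed

lemma le_val:
  assumes "compact X" "compact Y" "continuous_on (X \<times> Y) (\<lambda>(x, y). f x y)"
    and x: "x \<in> X" and y: "y \<in> feasible K g Y x"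
  shows "f x y \<le> val f K g Y x"
proof -
  have "bdd_above ((\<lambda>(x, y). f x y) ` (X \<times> Y))"
    using assms(1-3) by (intro bounded_imp_bdd_above compact_imp_bounded compact_continuous_image compact_Times)
  then have "bdd_above ((\<lambda>y. f x y) ` feasible K g Y x)"
    by (rule bdd_above_mono) (use x in \<open>auto simp: feasible_def\<close>)
  with y show ?thesis
    unfolding val_def by (rule cSUP_upper)
qed

lemma val_le_best_response:
  assumes "y \<in> feasible K g Y x" and "\<forall>y' \<in> feasible K g Y x. f x y' \<le> f x y"
  shows "val f K g Y x \<le> f x y"
  unfolding val_def using assms by (intro cSUP_least) auto

theorem mainTheorem1:
  fixes X :: "'a::euclidean_space set" and Y :: "'b::euclidean_space set"
    and f :: "'a \<Rightarrow> 'b \<Rightarrow> real" and K :: nat and g :: "nat \<Rightarrow> 'a \<Rightarrow> 'b \<Rightarrow> real"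
    and T :: nat and xs :: "nat \<Rightarrow> 'a" and eps :: real and ystar :: 'b
  assumes SA: "standing_assumption X Y f K g"
    and T: "T \<ge> 1"
    and xs_in: "\<forall>t\<in>{1..T}. xs t \<in> X"
    and regret: "\<forall>x\<in>X. (1 / real T) * (\<Sum>t=1..T. val f K g Y (xs t)) - (1 / real T) * (\<Sum>t=1..T. val f K g Y x) \<le> eps"
    and ystar: "ystar \<in> feasible K g Y ((1 / real T) *\<^sub>R (\<Sum>t=1..T. xs t))"
    and ystar_max: "\<forall>y \<in> feasible K g Y ((1 / real T) *\<^sub>R (\<Sum>t=1..T. xs t)).
                      f ((1 / real T) *\<^sub>R (\<Sum>t=1..T. xs t)) y \<le> f ((1 / real T) *\<^sub>R (\<Sum>t=1..T. xs t)) ystar"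
  shows "stackelberg_eq X Y f K g eps 0 ((1 / real T) *\<^sub>R (\<Sum>t=1..T. xs t)) ystar"
proof -
  define xbar where "xbar = (1 / real T) *\<^sub>R (\<Sum>t=1..T. xs t)"
  have T_pos: "real T > 0" and weights: "(\<Sum>t=1..T. 1 / real T) = 1"
    using T by auto
  have xbar_avg: "xbar = (\<Sum>t=1..T. (1 / real T) *\<^sub>R xs t)"
    by (simp add: xbar_def scaleR_sum_right)
  from SA have "convex X" "compact X" "compact Y" "X \<noteq> {}"
    and f_cont: "continuous_on (X \<times> Y) (\<lambda>(x, y). f x y)"
    and f_conv: "\<forall>y\<in>Y. convex_on X (\<lambda>x. f x y)"
    and g_conv: "\<forall>k<K. \<forall>y\<in>Y. convex_on ({0..} \<times> X) (\<lambda>(\<mu>, x). \<mu> * g k x y)"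
    unfolding standing_assumption_def by auto
  have xbar_X: "xbar \<in> X"
    unfolding xbar_avg using \<open>convex X\<close> weights xs_in by (intro convex_sum) auto
  have ystar_feas: "ystar \<in> feasible K g Y xbar" and ystar_Y: "ystar \<in> Y"
    using ystar by (auto simp: xbar_def feasible_def)
  have ystar_feas_t: "ystar \<in> feasible K g Y (xs t)" if "t \<in> {1..T}" for t
    using ystar_feas xs_in T_pos that unfolding xbar_avg
    by (intro feasible_average_imp_feasible[OF g_conv _ weights, where p = xs]) auto
  have upper: "f xbar ystar \<le> val f K g Y x + eps" if x: "x \<in> X" for x
  proof -
    have "f xbar ystar \<le> (\<Sum>t=1..T. (1 / real T) * f (xs t) ystar)"
      unfolding xbar_avg using T f_conv ystar_Y xs_in weights by (intro convex_on_sum) auto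
    also have "\<dots> \<le> (\<Sum>t=1..T. (1 / real T) * val f K g Y (xs t))"
      using xs_in ystar_feas_t by (intro sum_mono mult_left_mono le_val[OF \<open>compact X\<close> \<open>compact Y\<close> f_cont]) auto
    also have "\<dots> = (1 / real T) * (\<Sum>t=1..T. val f K g Y (xs t))"
      by (rule sum_distrib_left[symmetric])
    also have "\<dots> \<le> (1 / real T) * (\<Sum>t=1..T. val f K g Y x) + eps"
      using regret x by force
    also have "(1 / real T) * (\<Sum>t=1..T. val f K g Y x) = val f K g Y x"
      using T_pos by simp
    finally show ?thesis .
  qed
  have "f xbar ystar - eps \<le> (INF x \<in> X. val f K g Y x)"
    using upper \<open>X \<noteq> {}\<close> by (intro cINF_greatest) force+
  moreover have "val f K g Y xbar \<le> f xbar ystar"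
    using ystar ystar_max by (intro val_le_best_response) (auto simp: xbar_def)
  ultimately show ?thesis
    using xbar_X ystar unfolding stackelberg_eq_def xbar_def[symmetric] by auto
qed

end
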